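(* For every integer $t\ge1$, $\liminf_{n\to\infty}\frac{\mathrm{orsat}(n,K_{t+2})}{n^{3/2}}=\frac{\sqrt t}{2}$.
   Context: All graphs are finite and simple. A graph is regular if all vertices have the same degree. For a graph $F$, a graph $G$ is $F$-oversaturated if for every pair $e$ of non-adjacent vertices of $G$, the graph obtained from $G$ by adding the edge $e$ contains a copy of $F$ that uses the edge $e$ ($G$ itself need not be $F$-free). $\mathrm{orsat}(n,F)$ denotes the smallest number of edges of a regular $n$-vertex $F$-oversaturated graph. $K_r$ denotes the complete graph on $r$ vertices. *)

theory Defs
  imports Complex_Main "HOL-Library.Liminf_Limsup" "HOL-Library.Extended_Real"
begin

definition simple_graph :: "nat \<Rightarrow> nat set set \<Rightarrow> bool" where
  "simple_graph n E \<longleftrightarrow> (\<forall>e\<in>E. e \<subseteq> {..<n} \<and> card e = 2)"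

definition degree :: "nat set set \<Rightarrow> nat \<Rightarrow> nat" where
  "degree E v = card {e \<in> E. v \<in> e}"

definition regular_graph :: "nat \<Rightarrow> nat set set \<Rightarrow> bool" where
  "regular_graph n E \<longleftrightarrow> (\<forall>u<n. \<forall>v<n. degree E u = degree E v)"

definition has_clique_using :: "nat \<Rightarrow> nat set set \<Rightarrow> nat \<Rightarrow> nat \<Rightarrow> nat \<Rightarrow> bool" where
  "has_clique_using n E' r u v \<longleftrightarrow>
     (\<exists>S. S \<subseteq> {..<n} \<and> card S = r \<and> u \<in> S \<and> v \<in> S \<and>
          (\<forall>x\<in>S. \<forall>y\<in>S. x \<noteq> y \<longrightarrow> {x, y} \<in> E'))"

definition clique_oversaturated :: "nat \<Rightarrow> nat \<Rightarrow> nat set set \<Rightarrow> bool" where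
  "clique_oversaturated r n E \<longleftrightarrow>
     (\<forall>u<n. \<forall>v<n. u \<noteq> v \<and> {u, v} \<notin> E \<longrightarrow> has_clique_using n (insert {u, v} E) r u v)"

text \<open>orsat(n, K_r): minimum number of edges of a regular n-vertex K_r-oversaturated graph
(the complete graph always qualifies, so the set is nonempty).\<close>

definition orsat_clique :: "nat \<Rightarrow> nat \<Rightarrow> nat" where
  "orsat_clique n r = Min {card E | E. simple_graph n E \<and> regular_graph n E \<and> clique_oversaturated r n E}"

end

theory Submission
  imports Defs "HOL-Number_Theory.Cong" "HOL-Real_Asymp.Real_Asymp"
begin

(* In a regular K_{t+2}-oversaturated graph any two non-adjacent vertices have at
   least t common neighbours. For a vertex v of degree d, counting the pairs (u, w) with u a
   non-neighbour of v and w a common neighbour of u and v gives t (n - 1 - d) <= d (d - 1), hence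
   d >= sqrt (t (n - 1)) - t, and the graph has nd/2 >= (sqrt t / 2 - o(1)) n^(3/2) edges.

   For an odd prime p, take the polarity graph of the projective plane over Z_p and
   replace the loops at its p + 1 absolute points by a perfect matching of these points. This is a
   (p + 1)-regular graph of diameter two on p^2 + p + 1 vertices. Blowing up every vertex into a
   t-clique and every edge into a complete bipartite graph gives a regular K_{t+2}-oversaturated
   graph on n = t (p^2 + p + 1) vertices: two non-adjacent vertices lie in blobs with a common
   neighbouring blob, which completes them to a K_{t+2}. It has
   n (t - 1 + t (p + 1)) / 2 = (sqrt t / 2 + o(1)) n^(3/2) edges. *)

lemma simple_graph_finite: "simple_graph n E \<Longrightarrow> finite E"
  unfolding simple_graph_def by (rule finite_subset[of _ "Pow {..<n}"]) auto

lemma sum_card_filter_swap: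
  assumes "finite A" and "finite B"
  shows "(\<Sum>a\<in>A. card {b\<in>B. R a b}) = (\<Sum>b\<in>B. card {a\<in>A. R a b})"
  using sum.swap_restrict[OF assms, of "\<lambda>_ _. 1::nat" R] by simp

lemma sum_degree_eq_twice_card_edges:
  assumes "simple_graph n E"
  shows "(\<Sum>v<n. degree E v) = 2 * card E"
proof -
  have "(\<Sum>v<n. degree E v) = (\<Sum>v<n. card {e\<in>E. v \<in> e})"
    unfolding degree_def ..
  also have "\<dots> = (\<Sum>e\<in>E. card {v\<in>{..<n}. v \<in> e})"
    using sum_card_filter_swap[OF finite_lessThan simple_graph_finite[OF assms]] .
  also have "\<dots> = (\<Sum>e\<in>E. 2)"
  proof (rule sum.cong)
    fix e assume "e \<in> E"
    then have "e \<subseteq> {..<n}" "card e = 2"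
      using assms unfolding simple_graph_def by auto
    then have "{v\<in>{..<n}. v \<in> e} = e"
      by auto
    then show "card {v\<in>{..<n}. v \<in> e} = 2"
      using \<open>card e = 2\<close> by simp
  qed simp
  finally show ?thesis by simp
qed

lemma card_edges_if_regular:
  assumes "simple_graph n E" and "\<And>v. v < n \<Longrightarrow> degree E v = d"
  shows "n * d = 2 * card E"
proof -
  have "(\<Sum>v<n. degree E v) = (\<Sum>v<n. d)"
    by (rule sum.cong[OF refl]) (simp add: assms(2))
  then show ?thesis
    using sum_degree_eq_twice_card_edges[OF assms(1)] by simp
qed

definition neighbours :: "nat \<Rightarrow> nat set set \<Rightarrow> nat \<Rightarrow> nat set" where
  "neighbours n E v = {u. u < n \<and> {u, v} \<in> E}"

lemma neighbours_subset: "neighbours n E v \<subseteq> {..<n}"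
  unfolding neighbours_def by auto

lemma finite_neighbours [simp]: "finite (neighbours n E v)"
  by (rule finite_subset[OF neighbours_subset]) simp

lemma not_mem_neighbours_self: "simple_graph n E \<Longrightarrow> v \<notin> neighbours n E v"
  unfolding neighbours_def simple_graph_def by auto

lemma mem_neighbours_commute: "u \<in> neighbours n E v \<Longrightarrow> v < n \<Longrightarrow> v \<in> neighbours n E u"
  unfolding neighbours_def by (auto simp: insert_commute)

lemma degree_eq_card_neighbours:
  assumes "simple_graph n E"
  shows "degree E v = card (neighbours n E v)"
proof -
  have "bij_betw (\<lambda>u. {u, v}) (neighbours n E v) {e\<in>E. v \<in> e}"
  proof (rule bij_betwI')
    fix x y
    show "({x, v} = {y, v}) = (x = y)"
      by (auto simp: doubleton_eq_iff)
  next
    fix x assume "x \<in> neighbours n E v"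
    then show "{x, v} \<in> {e\<in>E. v \<in> e}"
      unfolding neighbours_def by auto
  next
    fix e assume e: "e \<in> {e\<in>E. v \<in> e}"
    then have "card e = 2" "e \<subseteq> {..<n}"
      using assms unfolding simple_graph_def by auto
    then obtain a b where "e = {a, b}" "a \<noteq> b"
      unfolding card_2_iff by blast
    with e obtain u where "e = {u, v}"
      by (metis empty_iff insert_commute insert_iff mem_Collect_eq)
    moreover have "u < n"
      using \<open>e \<subseteq> {..<n}\<close> calculation by auto
    ultimately show "\<exists>u\<in>neighbours n E v. e = {u, v}"
      using e unfolding neighbours_def by auto
  qed
  then show ?thesis
    unfolding degree_def by (simp add: bij_betw_same_card)
qed

lemma degree_le:
  assumes "simple_graph n E" and "v < n"
  shows "degree E v \<le> n - 1"
proof -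
  have "neighbours n E v \<subseteq> {..<n} - {v}"
    using neighbours_subset not_mem_neighbours_self[OF assms(1)] by blast
  then have "card (neighbours n E v) \<le> card ({..<n} - {v})"
    by (rule card_mono[rotated]) simp
  then show ?thesis
    using assms(2) by (simp add: degree_eq_card_neighbours[OF assms(1)])
qed

section \<open>The lower bound\<close>

lemma card_common_neighbours_ge:
  assumes "clique_oversaturated (t + 2) n E"
    and "u < n" "v < n" "u \<noteq> v" "{u, v} \<notin> E"
  shows "t \<le> card (neighbours n E u \<inter> neighbours n E v)"
proof -
  have "has_clique_using n (insert {u, v} E) (t + 2) u v"
    using assms unfolding clique_oversaturated_def by blast
  then obtain S where S: "S \<subseteq> {..<n}" "card S = t + 2" "u \<in> S" "v \<in> S"
    and clique: "\<forall>x\<in>S. \<forall>y\<in>S. x \<noteq> y \<longrightarrow> {x, y} \<in> insert {u, v} E"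
    unfolding has_clique_using_def by blast
  have "S - {u, v} \<subseteq> neighbours n E u \<inter> neighbours n E v"
  proof
    fix w assume w: "w \<in> S - {u, v}"
    then have "{w, u} \<in> insert {u, v} E" "{w, v} \<in> insert {u, v} E"
      using clique S(3,4) by auto
    moreover have "{w, u} \<noteq> {u, v}" "{w, v} \<noteq> {u, v}"
      using w assms(4) by (auto simp: doubleton_eq_iff)
    ultimately show "w \<in> neighbours n E u \<inter> neighbours n E v"
      using w S(1) unfolding neighbours_def by auto
  qed
  then have "card (S - {u, v}) \<le> card (neighbours n E u \<inter> neighbours n E v)"
    by (rule card_mono[rotated]) simp
  moreover have "card (S - {u, v}) = t"
    using S assms(4) finite_subset[OF S(1)] by (simp add: card_Diff_subset)
  ultimately show ?thesis
    by simp
qed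

lemma card_non_neighbours:
  assumes "simple_graph n E" and "v < n"
  shows "card ({..<n} - insert v (neighbours n E v)) = n - 1 - degree E v"
proof -
  have "insert v (neighbours n E v) \<subseteq> {..<n}" "v \<notin> neighbours n E v"
    using assms neighbours_subset not_mem_neighbours_self by auto
  moreover from this have "card (insert v (neighbours n E v)) = degree E v + 1"
    by (simp add: degree_eq_card_neighbours[OF assms(1)])
  ultimately show ?thesis
    by (simp add: card_Diff_subset)
qed

lemma card_neighbours_avoiding_le:
  assumes "simple_graph n E" and "w < n" and "A \<subseteq> {..<n}"
    and "v \<in> neighbours n E w" "v \<notin> A"
  shows "card {u\<in>A. w \<in> neighbours n E u} \<le> degree E w - 1"
proof -
  have "{u\<in>A. w \<in> neighbours n E u} \<subseteq> neighbours n E w - {v}"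
    using assms(3,5) mem_neighbours_commute[of w n E] by auto
  then have "card {u\<in>A. w \<in> neighbours n E u} \<le> card (neighbours n E w - {v})"
    by (rule card_mono[rotated]) simp
  with assms(4) show ?thesis
    by (simp add: degree_eq_card_neighbours[OF assms(1)])
qed

lemma degree_bound_if_oversaturated:
  assumes sg: "simple_graph n E" and reg: "regular_graph n E"
    and sat: "clique_oversaturated (t + 2) n E" and v: "v < n"
  shows "t * (n - 1 - degree E v) \<le> degree E v * (degree E v - 1)"
proof -
  define d where "d = degree E v"
  define N where "N = neighbours n E v"
  define M where "M = {..<n} - insert v N"
  have "t \<le> card {w\<in>N. w \<in> neighbours n E u}" if "u \<in> M" for u
  proof -
    from that have "u < n" "u \<noteq> v" "{u, v} \<notin> E"
      unfolding M_def N_def neighbours_def by auto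
    then have "t \<le> card (neighbours n E u \<inter> N)"
      unfolding N_def by (rule card_common_neighbours_ge[OF sat _ v])
    moreover have "{w\<in>N. w \<in> neighbours n E u} = neighbours n E u \<inter> N"
      by auto
    ultimately show ?thesis
      by simp
  qed
  then have "card M * t \<le> (\<Sum>u\<in>M. card {w\<in>N. w \<in> neighbours n E u})"
    using sum_bounded_below[of M t] by simp
  also have "\<dots> = (\<Sum>w\<in>N. card {u\<in>M. w \<in> neighbours n E u})"
    by (rule sum_card_filter_swap) (simp_all add: M_def N_def)
  also have "\<dots> \<le> card N * (d - 1)"
  proof -
    have "card {u\<in>M. w \<in> neighbours n E u} \<le> d - 1" if "w \<in> N" for w
    proof -
      from that have "w < n" "v \<in> neighbours n E w"
        using neighbours_subset[of n E v] mem_neighbours_commute[OF _ v] unfolding N_def by auto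
      moreover have "degree E w = d"
        using reg v \<open>w < n\<close> unfolding d_def regular_graph_def by blast
      ultimately show ?thesis
        using card_neighbours_avoiding_le[OF sg, of w M v] unfolding M_def by auto
    qed
    then show ?thesis
      using sum_bounded_above[of N _ "d - 1"] by simp
  qed
  finally show ?thesis
    using card_non_neighbours[OF sg v] degree_eq_card_neighbours[OF sg]
    unfolding M_def N_def d_def by (simp add: mult.commute)
qed

lemma finite_orsat_candidates:
  "finite {card E | E. simple_graph n E \<and> regular_graph n E \<and> clique_oversaturated r n E}"
proof (rule finite_subset)
  show "{card E | E. simple_graph n E \<and> regular_graph n E \<and> clique_oversaturated r n E}
      \<subseteq> card ` Pow (Pow {..<n})"
  proof safe
    fix E assume "simple_graph n E"
    then have "E \<in> Pow (Pow {..<n})"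
      unfolding simple_graph_def by auto
    then show "card E \<in> card ` Pow (Pow {..<n})"
      by (rule imageI)
  qed
qed simp

lemma ex_regular_oversaturated:
  "\<exists>E. simple_graph n E \<and> regular_graph n E \<and> clique_oversaturated r n E"
proof (intro exI conjI)
  define K where "K = {e. e \<subseteq> {..<n} \<and> card e = 2}"
  show sg: "simple_graph n K"
    unfolding simple_graph_def K_def by auto
  have "{u, v} \<in> K" if "u < n" "v < n" "u \<noteq> v" for u v
    using that unfolding K_def by auto
  then show "clique_oversaturated r n K"
    unfolding clique_oversaturated_def by blast
  have "degree K v = n - 1" if "v < n" for v
  proof -
    have "neighbours n K v = {..<n} - {v}"
      unfolding neighbours_def K_def using that by auto
    then show ?thesis
      using that by (simp add: degree_eq_card_neighbours[OF sg])
  qed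
  then show "regular_graph n K"
    unfolding regular_graph_def by simp
qed

lemma orsat_clique_attained:
  "\<exists>E. simple_graph n E \<and> regular_graph n E \<and> clique_oversaturated r n E \<and> card E = orsat_clique n r"
proof -
  let ?C = "{card E | E. simple_graph n E \<and> regular_graph n E \<and> clique_oversaturated r n E}"
  obtain K where "simple_graph n K \<and> regular_graph n K \<and> clique_oversaturated r n K"
    using ex_regular_oversaturated by blast
  then have "?C \<noteq> {}"
    by blast
  then have "Min ?C \<in> ?C"
    by (rule Min_in[OF finite_orsat_candidates])
  then show ?thesis
    unfolding orsat_clique_def by (auto simp: eq_commute)
qed

lemma orsat_clique_le:
  assumes "simple_graph n E" "regular_graph n E" "clique_oversaturated r n E"
  shows "orsat_clique n r \<le> card E"
  unfolding orsat_clique_def using assms by (intro Min_le[OF finite_orsat_candidates]) blast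

lemma sqrt_bound_if_quadratic_bound:
  fixes t n d :: nat
  assumes "t * (n - 1 - d) \<le> d * (d - 1)" and "d \<le> n - 1" and "n \<ge> 1"
  shows "sqrt (real t * (real n - 1)) - real t \<le> real d"
proof -
  define m where "m = n - 1 - d"
  have "n - 1 = m + d"
    using assms(2) unfolding m_def by simp
  have "t * m \<le> d * (d - 1)"
    using assms(1) unfolding m_def .
  moreover have "d * (d - 1) \<le> d * d"
    by (simp add: mult_le_mono2)
  ultimately have "t * (n - 1) \<le> d * d + t * d"
    unfolding \<open>n - 1 = m + d\<close> add_mult_distrib2 by linarith
  also have "\<dots> \<le> (d + t)\<^sup>2"
    by (simp add: power2_eq_square algebra_simps)
  finally have "real (t * (n - 1)) \<le> real ((d + t)\<^sup>2)"
    by (simp only: of_nat_le_iff)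
  then have "real t * (real n - 1) \<le> (real d + real t)\<^sup>2"
    using assms(3) by (simp add: of_nat_diff)
  then have "sqrt (real t * (real n - 1)) \<le> sqrt ((real d + real t)\<^sup>2)"
    by (rule real_sqrt_le_mono)
  then show ?thesis
    by simp
qed

lemma orsat_clique_lower_bound:
  assumes "n \<ge> 1"
  shows "real n * (sqrt (real t * (real n - 1)) - real t) \<le> 2 * real (orsat_clique n (t + 2))"
proof -
  obtain E where E: "simple_graph n E" "regular_graph n E" "clique_oversaturated (t + 2) n E"
    and card_E: "card E = orsat_clique n (t + 2)"
    using orsat_clique_attained by blast
  define d where "d = degree E 0"
  have "0 < n"
    using assms by simp
  have "degree E v = d" if "v < n" for v
    using E(2) that \<open>0 < n\<close> unfolding regular_graph_def d_def by blast
  then have "n * d = 2 * card E"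
    by (rule card_edges_if_regular[OF E(1)])
  then have "real n * real d = 2 * real (orsat_clique n (t + 2))"
    using card_E by (metis of_nat_mult of_nat_numeral)
  moreover have "sqrt (real t * (real n - 1)) - real t \<le> real d"
    using degree_bound_if_oversaturated[OF E(1,2,3) \<open>0 < n\<close>] degree_le[OF E(1) \<open>0 < n\<close>] assms
    unfolding d_def by (rule sqrt_bound_if_quadratic_bound)
  then have "real n * (sqrt (real t * (real n - 1)) - real t) \<le> real n * real d"
    by (rule mult_left_mono) simp
  ultimately show ?thesis
    by simp
qed

section \<open>Regular oversaturated graphs from relations and blow-ups\<close>

locale relation_graph =
  fixes V :: "'a set" and R :: "'a \<Rightarrow> 'a \<Rightarrow> bool" and g :: "'a \<Rightarrow> nat" and n :: nat
  assumes bij: "bij_betw g V {..<n}"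
    and sym: "\<And>x y. x \<in> V \<Longrightarrow> y \<in> V \<Longrightarrow> R x y \<Longrightarrow> R y x"
    and irrefl: "\<And>x. x \<in> V \<Longrightarrow> \<not> R x x"
begin

definition edges :: "nat set set" where
  "edges = {{g x, g y} | x y. x \<in> V \<and> y \<in> V \<and> R x y}"

lemma inj: "inj_on g V" and image_eq: "g ` V = {..<n}"
  using bij by (auto simp: bij_betw_def)

lemma ex_preimage: "u < n \<Longrightarrow> \<exists>x\<in>V. u = g x"
  using image_eq by (metis imageE lessThan_iff)

lemma edge_iff:
  assumes "x \<in> V" "y \<in> V"
  shows "{g x, g y} \<in> edges \<longleftrightarrow> R x y"
proof
  assume "{g x, g y} \<in> edges"
  then obtain x' y' where x'y': "x' \<in> V" "y' \<in> V" "R x' y'" "{g x, g y} = {g x', g y'}"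
    unfolding edges_def by blast
  then have "(x = x' \<and> y = y') \<or> (x = y' \<and> y = x')"
    using inj assms unfolding doubleton_eq_iff inj_on_def by blast
  then show "R x y"
    using x'y' sym by blast
qed (use assms in \<open>auto simp: edges_def\<close>)

lemma simple_graph_edges: "simple_graph n edges"
  unfolding simple_graph_def
proof
  fix e assume "e \<in> edges"
  then obtain x y where "x \<in> V" "y \<in> V" "R x y" "e = {g x, g y}"
    unfolding edges_def by blast
  moreover from this have "g x \<noteq> g y"
    using irrefl inj unfolding inj_on_def by metis
  ultimately show "e \<subseteq> {..<n} \<and> card e = 2"
    using image_eq by auto
qed

lemma neighbours_image:
  assumes "x \<in> V"
  shows "neighbours n edges (g x) = g ` {y\<in>V. R x y}"
proof (intro equalityI subsetI)
  fix u assume "u \<in> neighbours n edges (g x)"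
  then obtain y where "y \<in> V" "u = g y" "{g y, g x} \<in> edges"
    using ex_preimage unfolding neighbours_def by blast
  then show "u \<in> g ` {y\<in>V. R x y}"
    using edge_iff sym assms by blast
next
  fix u assume "u \<in> g ` {y\<in>V. R x y}"
  then obtain y where "y \<in> V" "R x y" "u = g y"
    by blast
  then show "u \<in> neighbours n edges (g x)"
    using edge_iff[of y x] sym assms image_eq unfolding neighbours_def by auto
qed

lemma degree_image:
  assumes "x \<in> V"
  shows "degree edges (g x) = card {y\<in>V. R x y}"
proof -
  have "inj_on g {y\<in>V. R x y}"
    using inj by (rule inj_on_subset) blast
  then show ?thesis
    using assms by (simp add: degree_eq_card_neighbours[OF simple_graph_edges] neighbours_image card_image)
qed

lemma has_clique_using_image:
  assumes "x \<in> V" "y \<in> V" "S \<subseteq> V" "card S = r" "x \<in> S" "y \<in> S"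
    and clique: "\<forall>a\<in>S. \<forall>b\<in>S. a \<noteq> b \<longrightarrow> R a b \<or> {a, b} = {x, y}"
  shows "has_clique_using n (insert {g x, g y} edges) r (g x) (g y)"
proof -
  have "{a, b} \<in> insert {g x, g y} edges" if "a \<in> g ` S" "b \<in> g ` S" "a \<noteq> b" for a b
  proof -
    from \<open>a \<in> g ` S\<close> obtain a' where "a = g a'" "a' \<in> S"
      by (rule imageE)
    from \<open>b \<in> g ` S\<close> obtain b' where "b = g b'" "b' \<in> S"
      by (rule imageE)
    have "a' \<noteq> b'"
      using \<open>a \<noteq> b\<close> \<open>a = g a'\<close> \<open>b = g b'\<close> by blast
    then consider "R a' b'" | "a' = x" "b' = y" | "a' = y" "b' = x"
      using clique \<open>a' \<in> S\<close> \<open>b' \<in> S\<close> by (auto simp: doubleton_eq_iff)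
    then show ?thesis
    proof cases
      case 1
      then show ?thesis
        using edge_iff \<open>a' \<in> S\<close> \<open>b' \<in> S\<close> assms(3) \<open>a = g a'\<close> \<open>b = g b'\<close> by blast
    qed (use \<open>a = g a'\<close> \<open>b = g b'\<close> in \<open>auto simp: insert_commute\<close>)
  qed
  moreover have "g ` S \<subseteq> {..<n}"
    using image_mono[OF assms(3), of g] image_eq by simp
  moreover have "card (g ` S) = r"
    using card_image[OF inj_on_subset[OF inj assms(3)]] assms(4) by simp
  moreover have "g x \<in> g ` S" "g y \<in> g ` S"
    using assms(5,6) by simp_all
  ultimately show ?thesis
    unfolding has_clique_using_def by blast
qed

end

lemma orsat_clique_le_of_relation:
  fixes V :: "'a set" and R :: "'a \<Rightarrow> 'a \<Rightarrow> bool"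
  assumes "finite V"
    and sym: "\<And>x y. x \<in> V \<Longrightarrow> y \<in> V \<Longrightarrow> R x y \<Longrightarrow> R y x"
    and irrefl: "\<And>x. x \<in> V \<Longrightarrow> \<not> R x x"
    and deg: "\<And>x. x \<in> V \<Longrightarrow> card {y\<in>V. R x y} = d"
    and sat: "\<And>x y. x \<in> V \<Longrightarrow> y \<in> V \<Longrightarrow> x \<noteq> y \<Longrightarrow> \<not> R x y \<Longrightarrow>
      \<exists>S\<subseteq>V. card S = r \<and> x \<in> S \<and> y \<in> S \<and> (\<forall>a\<in>S. \<forall>b\<in>S. a \<noteq> b \<longrightarrow> R a b \<or> {a, b} = {x, y})"
  shows "2 * orsat_clique (card V) r \<le> card V * d"
proof -
  define n where "n = card V"
  obtain g where "bij_betw g V {..<n}"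
    using ex_bij_betw_finite_nat[OF \<open>finite V\<close>] unfolding n_def atLeast0LessThan by blast
  then interpret relation_graph V R g n
    using sym irrefl by unfold_locales
  have degree: "degree edges u = d" if "u < n" for u
    using ex_preimage[OF that] degree_image deg by auto
  then have "regular_graph n edges"
    unfolding regular_graph_def by simp
  moreover have "clique_oversaturated r n edges"
    unfolding clique_oversaturated_def
  proof (intro allI impI)
    fix u v assume uv: "u < n" "v < n" "u \<noteq> v \<and> {u, v} \<notin> edges"
    obtain x y where xy: "x \<in> V" "y \<in> V" "u = g x" "v = g y"
      using ex_preimage uv(1,2) by blast
    with uv have "x \<noteq> y" "\<not> R x y"
      using edge_iff[OF xy(1,2)] by auto
    then obtain S where "S \<subseteq> V" "card S = r" "x \<in> S" "y \<in> S"
      "\<forall>a\<in>S. \<forall>b\<in>S. a \<noteq> b \<longrightarrow> R a b \<or> {a, b} = {x, y}"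
      using sat[OF xy(1,2)] by blast
    then show "has_clique_using n (insert {u, v} edges) r u v"
      using has_clique_using_image xy by blast
  qed
  ultimately have "orsat_clique n r \<le> card edges"
    using orsat_clique_le simple_graph_edges by blast
  moreover have "n * d = 2 * card edges"
    using card_edges_if_regular[OF simple_graph_edges degree] .
  ultimately show ?thesis
    unfolding n_def by simp
qed

definition blowup :: "('a \<Rightarrow> 'a \<Rightarrow> bool) \<Rightarrow> 'a \<times> nat \<Rightarrow> 'a \<times> nat \<Rightarrow> bool" where
  "blowup R p q \<longleftrightarrow> (fst p = fst q \<and> snd p \<noteq> snd q) \<or> R (fst p) (fst q)"

lemma card_blowup_neighbours:
  assumes "finite V" "x \<in> V" "i < t" and irrefl: "\<not> R x x"
  shows "card {q\<in>V \<times> {..<t}. blowup R (x, i) q} = t - 1 + t * card {y\<in>V. R x y}"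
proof -
  have "{q\<in>V \<times> {..<t}. blowup R (x, i) q} = {x} \<times> ({..<t} - {i}) \<union> {y\<in>V. R x y} \<times> {..<t}"
    unfolding blowup_def using assms by auto
  moreover have "{x} \<times> ({..<t} - {i}) \<inter> {y\<in>V. R x y} \<times> {..<t} = {}"
    using irrefl by auto
  ultimately show ?thesis
    using assms by (simp add: card_Un_disjoint card_cartesian_product mult.commute)
qed

lemma blowup_saturated:
  assumes "x \<in> V" "y \<in> V" "z \<in> V" "i < t" "j < t" "x \<noteq> y"
    and "R x z" "R z x" "R y z" "R z y" "z \<noteq> x" "z \<noteq> y"
  shows "\<exists>S\<subseteq>V \<times> {..<t}. card S = t + 2 \<and> (x, i) \<in> S \<and> (y, j) \<in> S \<and>
    (\<forall>a\<in>S. \<forall>b\<in>S. a \<noteq> b \<longrightarrow> blowup R a b \<or> {a, b} = {(x, i), (y, j)})"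
proof -
  let ?S = "insert (x, i) (insert (y, j) ({z} \<times> {..<t}))"
  have "?S \<subseteq> V \<times> {..<t}" "card ?S = t + 2"
    "\<forall>a\<in>?S. \<forall>b\<in>?S. a \<noteq> b \<longrightarrow> blowup R a b \<or> {a, b} = {(x, i), (y, j)}"
    using assms by (auto simp: blowup_def card_cartesian_product)
  then show ?thesis
    by blast
qed

lemma orsat_clique_le_blowup:
  fixes V :: "'a set" and R :: "'a \<Rightarrow> 'a \<Rightarrow> bool"
  assumes "finite V"
    and sym: "\<And>x y. x \<in> V \<Longrightarrow> y \<in> V \<Longrightarrow> R x y \<Longrightarrow> R y x"
    and irrefl: "\<And>x. x \<in> V \<Longrightarrow> \<not> R x x"
    and deg: "\<And>x. x \<in> V \<Longrightarrow> card {y\<in>V. R x y} = k"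
    and diameter_2: "\<And>x y. x \<in> V \<Longrightarrow> y \<in> V \<Longrightarrow> x \<noteq> y \<Longrightarrow> \<not> R x y \<Longrightarrow> \<exists>z\<in>V. R x z \<and> R y z"
  shows "2 * orsat_clique (t * card V) (t + 2) \<le> t * card V * (t - 1 + t * k)"
proof -
  have "2 * orsat_clique (card (V \<times> {..<t})) (t + 2) \<le> card (V \<times> {..<t}) * (t - 1 + t * k)"
  proof (rule orsat_clique_le_of_relation)
    show "blowup R q p" if "p \<in> V \<times> {..<t}" "q \<in> V \<times> {..<t}" "blowup R p q" for p q
      using that sym[of "fst p" "fst q"] unfolding blowup_def by auto
    show "\<not> blowup R p p" if "p \<in> V \<times> {..<t}" for p
      using that irrefl unfolding blowup_def by auto
    show "card {q\<in>V \<times> {..<t}. blowup R p q} = t - 1 + t * k" if "p \<in> V \<times> {..<t}" for p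
      using that card_blowup_neighbours[OF \<open>finite V\<close>] irrefl deg by auto
  next
    fix p q assume "p \<in> V \<times> {..<t}" "q \<in> V \<times> {..<t}" "p \<noteq> q" "\<not> blowup R p q"
    then obtain x i y j where pq: "p = (x, i)" "q = (y, j)" "x \<in> V" "y \<in> V" "i < t" "j < t"
      by auto
    with \<open>p \<noteq> q\<close> \<open>\<not> blowup R p q\<close> have "x \<noteq> y" "\<not> R x y"
      unfolding blowup_def by auto
    then obtain z where z: "z \<in> V" "R x z" "R y z"
      using diameter_2 pq(3,4) by blast
    moreover from this have "R z x" "R z y" "z \<noteq> x" "z \<noteq> y"
      using sym[of x z] sym[of y z] irrefl pq(3,4) by auto
    ultimately show "\<exists>S\<subseteq>V \<times> {..<t}. card S = t + 2 \<and> p \<in> S \<and> q \<in> S \<and>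
        (\<forall>a\<in>S. \<forall>b\<in>S. a \<noteq> b \<longrightarrow> blowup R a b \<or> {a, b} = {p, q})"
      unfolding pq(1,2) by (intro blowup_saturated[OF pq(3,4) _ pq(5,6) \<open>x \<noteq> y\<close>])
  qed (use \<open>finite V\<close> in simp)
  then show ?thesis
    by (simp add: card_cartesian_product mult.commute)
qed

section \<open>A regular polarity graph of diameter two\<close>

(* Aff a b, Ideal a and Ideal_inf are the points (a, b), (a, oo) and (oo, oo) of the projective
   plane over Z_p; coordinates are represented by residues in {0..<p}. *)
datatype point = Aff int int | Ideal int | Ideal_inf

locale odd_prime =
  fixes p :: int
  assumes prime_p: "prime p" and p_gt_2: "p > 2"
begin

lemma p_pos: "p > 0"
  using p_gt_2 by simp

lemma residue_eq_if_dvd_diff: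
  assumes "0 \<le> x" "x < p" "0 \<le> y" "y < p" and "p dvd x - y"
  shows "x = y"
  using assms by (intro cong_less_imp_eq_int) (simp_all add: cong_iff_dvd_diff)

lemma dvd_double_imp_dvd:
  assumes "p dvd 2 * x"
  shows "p dvd x"
proof -
  have "\<not> p dvd 2"
    using p_gt_2 zdvd_imp_le by fastforce
  with assms show ?thesis
    using prime_p by (simp add: prime_dvd_mult_iff)
qed

lemma cong_solve_residue:
  assumes "\<not> p dvd k"
  obtains e where "0 \<le> e" "e < p" "[k * e = r] (mod p)"
proof -
  have "coprime k p"
    using prime_imp_coprime[OF prime_p assms] by (simp add: coprime_commute)
  then obtain x where x: "[k * x = r] (mod p)"
    using cong_solve_dvd_int[of k p r] by (auto simp: coprime_imp_gcd_eq_1)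
  have "[k * (x mod p) = k * x] (mod p)"
    by (intro cong_scalar_left) (simp add: cong_mod_left)
  then have "[k * (x mod p) = r] (mod p)"
    using x by (rule cong_trans)
  then show ?thesis
    using p_pos by (intro that[of "x mod p"]) simp_all
qed

lemma cong_add_iff_eq_mod:
  assumes "0 \<le> d" "d < p"
  shows "[b + d = s] (mod p) \<longleftrightarrow> d = (s - b) mod p"
proof -
  have "[b + d = s] (mod p) \<longleftrightarrow> [d = s - b] (mod p)"
    by (simp add: cong_iff_dvd_diff algebra_simps)
  also have "\<dots> \<longleftrightarrow> d = (s - b) mod p"
    using assms by (simp add: Cong.cong_def)
  finally show ?thesis .
qed

definition points :: "point set" where
  "points = (\<lambda>(a, b). Aff a b) ` ({0..<p} \<times> {0..<p}) \<union> Ideal ` {0..<p} \<union> {Ideal_inf}"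

lemma Aff_in_points [simp]: "Aff a b \<in> points \<longleftrightarrow> 0 \<le> a \<and> a < p \<and> 0 \<le> b \<and> b < p"
  and Ideal_in_points [simp]: "Ideal a \<in> points \<longleftrightarrow> 0 \<le> a \<and> a < p"
  and Ideal_inf_in_points [simp]: "Ideal_inf \<in> points"
  unfolding points_def by auto

lemma finite_points: "finite points"
  unfolding points_def by simp

lemma card_points: "card points = nat p ^ 2 + nat p + 1"
proof -
  have "card ((\<lambda>(a, b). Aff a b) ` ({0..<p} \<times> {0..<p})) = nat p * nat p"
    by (subst card_image) (auto simp: inj_on_def card_cartesian_product)
  moreover have "card (Ideal ` {0..<p}) = nat p"
    by (simp add: card_image inj_on_def)
  moreover have "(\<lambda>(a, b). Aff a b) ` ({0..<p} \<times> {0..<p}) \<inter> Ideal ` {0..<p} = {}"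
    by auto
  ultimately show ?thesis
    unfolding points_def by (simp add: card_Un_disjoint power2_eq_square image_iff)
qed

(* The absolute points, those with polar x x, are Aff a (2 a^2 mod p) and Ideal_inf. *)
fun polar :: "point \<Rightarrow> point \<Rightarrow> bool" where
  "polar (Aff a b) (Aff c d) \<longleftrightarrow> [b + d = (a + c)\<^sup>2] (mod p)"
| "polar (Aff a b) (Ideal c) \<longleftrightarrow> a = c"
| "polar (Aff a b) Ideal_inf \<longleftrightarrow> False"
| "polar (Ideal a) (Aff c d) \<longleftrightarrow> a = c"
| "polar (Ideal a) (Ideal c) \<longleftrightarrow> False"
| "polar (Ideal a) Ideal_inf \<longleftrightarrow> True"
| "polar Ideal_inf (Aff c d) \<longleftrightarrow> False"
| "polar Ideal_inf (Ideal c) \<longleftrightarrow> True"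
| "polar Ideal_inf Ideal_inf \<longleftrightarrow> True"

lemma polar_commute: "polar x y \<longleftrightarrow> polar y x"
  by (cases x; cases y) (auto simp: add.commute)

lemma polar_neighbours_Aff:
  assumes "0 \<le> a" "a < p"
  shows "{y\<in>points. polar (Aff a b) y} = (\<lambda>c. Aff c (((a + c)\<^sup>2 - b) mod p)) ` {0..<p} \<union> {Ideal a}"
proof (intro equalityI subsetI)
  fix y assume "y \<in> {y\<in>points. polar (Aff a b) y}"
  then show "y \<in> (\<lambda>c. Aff c (((a + c)\<^sup>2 - b) mod p)) ` {0..<p} \<union> {Ideal a}"
    by (cases y) (auto simp: cong_add_iff_eq_mod)
next
  fix y assume "y \<in> (\<lambda>c. Aff c (((a + c)\<^sup>2 - b) mod p)) ` {0..<p} \<union> {Ideal a}"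
  then show "y \<in> {y\<in>points. polar (Aff a b) y}"
    using assms p_pos by (auto simp: cong_add_iff_eq_mod)
qed

lemma polar_neighbours_Ideal:
  assumes "0 \<le> a" "a < p"
  shows "{y\<in>points. polar (Ideal a) y} = Aff a ` {0..<p} \<union> {Ideal_inf}"
  using assms by (auto elim: polar.elims)

lemma polar_neighbours_Ideal_inf: "{y\<in>points. polar Ideal_inf y} = Ideal ` {0..<p} \<union> {Ideal_inf}"
  by (auto elim: polar.elims)

lemma card_polar_neighbours:
  assumes "x \<in> points"
  shows "card {y\<in>points. polar x y} = nat p + 1"
proof (cases x)
  case (Aff a b)
  have "inj_on (\<lambda>c. Aff c (((a + c)\<^sup>2 - b) mod p)) {0..<p}"
    by (auto simp: inj_on_def)
  then show ?thesis
    using Aff assms by (simp add: polar_neighbours_Aff card_image image_iff)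
next
  case (Ideal a)
  then show ?thesis
    using assms by (simp add: polar_neighbours_Ideal card_image inj_on_def image_iff)
next
  case Ideal_inf
  then show ?thesis
    by (simp add: polar_neighbours_Ideal_inf card_image inj_on_def image_iff)
qed

lemma common_polar_neighbour_Aff:
  assumes "0 \<le> a" "a < p" "0 \<le> c" "c < p" "a \<noteq> c"
  shows "\<exists>z\<in>points. polar (Aff a b) z \<and> polar (Aff c d) z"
proof -
  (* Subtracting the two congruences required of Aff e f leaves 2 (a - c) e = r. *)
  define r where "r = b - d - (a - c) * (a + c)"
  have "\<not> p dvd a - c"
    using assms residue_eq_if_dvd_diff by blast
  then have "\<not> p dvd 2 * (a - c)"
    using dvd_double_imp_dvd by blast
  then obtain e where e: "0 \<le> e" "e < p" "[2 * (a - c) * e = r] (mod p)"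
    by (rule cong_solve_residue)
  define f where "f = ((a + e)\<^sup>2 - b) mod p"
  have "(c + e)\<^sup>2 - d - ((a + e)\<^sup>2 - b) = r - 2 * (a - c) * e"
    unfolding r_def by (simp add: power2_eq_square algebra_simps)
  then have "[(c + e)\<^sup>2 - d = (a + e)\<^sup>2 - b] (mod p)"
    using e(3) by (simp add: cong_iff_dvd_diff dvd_diff_commute)
  then have "[f = (c + e)\<^sup>2 - d] (mod p)"
    unfolding f_def by (simp add: cong_sym_eq)
  then have "polar (Aff c d) (Aff e f)"
    using cong_add_lcancel[of d f "(c + e)\<^sup>2 - d" p] by simp
  moreover have "polar (Aff a b) (Aff e f)"
    unfolding f_def using cong_add_lcancel[of b "((a + e)\<^sup>2 - b) mod p" "(a + e)\<^sup>2 - b" p] by simp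
  moreover have "Aff e f \<in> points"
    using e p_pos unfolding f_def by simp
  ultimately show ?thesis
    by blast
qed

lemma common_polar_neighbour:
  assumes "x \<in> points" "y \<in> points"
  shows "\<exists>z\<in>points. polar x z \<and> polar y z"
proof -
  have Aff_Ideal: "\<exists>z\<in>points. polar (Aff a b) z \<and> polar (Ideal c) z"
    if "0 \<le> c" "c < p" for a b c
  proof -
    have "polar (Aff a b) (Aff c (((a + c)\<^sup>2 - b) mod p))"
      using that p_pos by (simp add: cong_add_iff_eq_mod)
    then show ?thesis
      using that p_pos by (intro bexI[of _ "Aff c (((a + c)\<^sup>2 - b) mod p)"]) simp_all
  qed
  show ?thesis
  proof (cases x; cases y)
    fix a b c d assume "x = Aff a b" "y = Aff c d"
    moreover have "0 \<le> a" "a < p" "0 \<le> c" "c < p"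
      using assms \<open>x = Aff a b\<close> \<open>y = Aff c d\<close> by simp_all
    ultimately show ?thesis
    proof (cases "a = c")
      case True
      then show ?thesis
        using \<open>x = Aff a b\<close> \<open>y = Aff c d\<close> \<open>0 \<le> a\<close> \<open>a < p\<close>
        by (intro bexI[of _ "Ideal a"]) simp_all
    qed (simp add: common_polar_neighbour_Aff)
  next
    fix a b c assume "x = Aff a b" "y = Ideal c"
    then show ?thesis
      using assms Aff_Ideal by simp
  next
    fix a c d assume "x = Ideal a" "y = Aff c d"
    then show ?thesis
      using assms Aff_Ideal[where a = c and b = d and c = a] by (auto simp: polar_commute)
  qed (use assms in \<open>force intro: bexI[of _ Ideal_inf] bexI[of _ "Ideal _"]\<close>)+
qed

(* A perfect matching of the absolute points; joining each absolute point to its partner instead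
   of to itself keeps every degree equal to p + 1. *)
fun partner :: "point \<Rightarrow> point" where
  "partner (Aff a b) = (if a = 0 then Ideal_inf else Aff ((- a) mod p) b)"
| "partner (Ideal a) = Ideal a"
| "partner Ideal_inf = Aff 0 0"

lemma absolute_Aff_eq_0_iff:
  assumes "0 \<le> a" "a < p" "0 \<le> b" "b < p" and "polar (Aff a b) (Aff a b)"
  shows "b = 0 \<longleftrightarrow> a = 0"
proof
  assume "b = 0"
  with assms(5) have "[0 = (a + a)\<^sup>2] (mod p)"
    by simp
  then have "[(a + a)\<^sup>2 = 0] (mod p)"
    by (rule cong_sym)
  then have "p dvd (a + a)\<^sup>2"
    by (simp only: cong_0_iff)
  then have "p dvd 2 * a"
    unfolding mult_2 by (rule prime_dvd_power[OF prime_p])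
  then have "p dvd a"
    by (rule dvd_double_imp_dvd)
  then show "a = 0"
    using assms(1,2) residue_eq_if_dvd_diff[of a 0] p_pos by simp
next
  assume "a = 0"
  with assms(5) have "[b + b = 0] (mod p)"
    by simp
  then have "p dvd 2 * b"
    unfolding mult_2 by (simp only: cong_0_iff)
  then have "p dvd b"
    by (rule dvd_double_imp_dvd)
  then show "b = 0"
    using assms(3,4) residue_eq_if_dvd_diff[of b 0] p_pos by simp
qed

lemma absolute_Aff_neg:
  assumes "polar (Aff a b) (Aff a b)"
  shows "polar (Aff ((- a) mod p) b) (Aff ((- a) mod p) b)"
proof -
  have "[(- a) mod p = - a] (mod p)"
    by (simp add: cong_mod_left)
  then have "[((- a) mod p + (- a) mod p)\<^sup>2 = (a + a)\<^sup>2] (mod p)"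
    using cong_pow[OF cong_add, of "(- a) mod p" "- a" p "(- a) mod p" "- a" 2]
    by (simp add: power2_eq_square)
  then show ?thesis
    using assms cong_trans[OF _ cong_sym] by (simp only: polar.simps)
qed

lemma not_polar_Aff_neg:
  assumes "0 \<le> a" "a < p" "0 \<le> b" "b < p" "a \<noteq> 0" and "polar (Aff a b) (Aff a b)"
  shows "\<not> polar (Aff a b) (Aff ((- a) mod p) b)"
proof
  assume "polar (Aff a b) (Aff ((- a) mod p) b)"
  then have "[b + b = (a + (- a) mod p)\<^sup>2] (mod p)"
    by (simp only: polar.simps)
  moreover have "[(a + (- a) mod p)\<^sup>2 = 0] (mod p)"
    using cong_pow[OF cong_add[OF cong_refl, of "(- a) mod p" "- a" p a], of 2]
    by (simp add: cong_mod_left)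
  ultimately have "[b + b = 0] (mod p)"
    by (rule cong_trans)
  then have "p dvd 2 * b"
    unfolding mult_2 by (simp only: cong_0_iff)
  then have "p dvd b"
    by (rule dvd_double_imp_dvd)
  then have "b = 0"
    using assms(3,4) residue_eq_if_dvd_diff[of b 0] p_pos by simp
  with assms absolute_Aff_eq_0_iff show False
    by blast
qed

lemma absolute_partner:
  assumes "x \<in> points" and "polar x x"
  shows "partner x \<in> points \<and> \<not> polar x (partner x) \<and> polar (partner x) (partner x) \<and>
    partner (partner x) = x"
proof (cases x)
  case (Aff a b)
  with assms have range: "0 \<le> a" "a < p" "0 \<le> b" "b < p" and self: "polar (Aff a b) (Aff a b)"
    by simp_all
  show ?thesis
  proof (cases "a = 0")
    case True
    then show ?thesis
      using Aff absolute_Aff_eq_0_iff[OF range self] p_pos by simp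
  next
    case False
    have "(- a) mod p \<noteq> 0"
    proof
      assume "(- a) mod p = 0"
      then have "p dvd - a"
        by (rule mod_0_imp_dvd)
      then show False
        using False range residue_eq_if_dvd_diff[of a 0] p_pos by simp
    qed
    moreover have "(- ((- a) mod p)) mod p = a"
      using range by (simp add: mod_minus_eq mod_pos_pos_trivial)
    ultimately show ?thesis
      using Aff False range p_pos absolute_Aff_neg[OF self] not_polar_Aff_neg[OF range False self]
      by simp
  qed
next
  case (Ideal a)
  with assms show ?thesis
    by simp
next
  case Ideal_inf
  then show ?thesis
    using p_pos by simp
qed

definition adj :: "point \<Rightarrow> point \<Rightarrow> bool" where
  "adj x y \<longleftrightarrow> x \<noteq> y \<and> (polar x y \<or> polar x x \<and> y = partner x)"

lemma adj_irrefl: "\<not> adj x x"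
  unfolding adj_def by simp

lemma adj_commute:
  assumes "x \<in> points" and "adj x y"
  shows "adj y x"
proof -
  have "x \<noteq> y"
    using assms(2) unfolding adj_def by simp
  consider "polar x y" | "polar x x" "y = partner x"
    using assms(2) unfolding adj_def by blast
  then show ?thesis
  proof cases
    case 1
    then show ?thesis
      using \<open>x \<noteq> y\<close> polar_commute unfolding adj_def by blast
  next
    case 2
    then show ?thesis
      using \<open>x \<noteq> y\<close> absolute_partner[OF assms(1)] unfolding adj_def by simp
  qed
qed

lemma card_adj_neighbours:
  assumes "x \<in> points"
  shows "card {y\<in>points. adj x y} = nat p + 1"
proof -
  define P where "P = {y\<in>points. polar x y}"
  have "finite P" "card P = nat p + 1"
    unfolding P_def using finite_points card_polar_neighbours[OF assms] by simp_all
  show ?thesis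
  proof (cases "polar x x")
    case True
    then have "{y\<in>points. adj x y} = insert (partner x) (P - {x})"
      using absolute_partner[OF assms] unfolding adj_def P_def by auto
    moreover have "x \<in> P" "partner x \<notin> P - {x}"
      using True assms absolute_partner[OF assms] unfolding P_def by auto
    ultimately show ?thesis
      using \<open>finite P\<close> \<open>card P = nat p + 1\<close> by (simp add: card_Suc_Diff1)
  next
    case False
    then have "{y\<in>points. adj x y} = P"
      unfolding adj_def P_def by auto
    then show ?thesis
      using \<open>card P = nat p + 1\<close> by simp
  qed
qed

lemma adj_diameter_2:
  assumes "x \<in> points" "y \<in> points" "x \<noteq> y" "\<not> adj x y"
  shows "\<exists>z\<in>points. adj x z \<and> adj y z"
proof -
  obtain z where "z \<in> points" "polar x z" "polar y z"
    using common_polar_neighbour[OF assms(1,2)] by blast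
  moreover have "\<not> polar x y"
    using assms(3,4) unfolding adj_def by simp
  ultimately have "z \<noteq> x" "z \<noteq> y"
    using polar_commute by blast+
  with \<open>polar x z\<close> \<open>polar y z\<close> have "adj x z" "adj y z"
    unfolding adj_def by auto
  with \<open>z \<in> points\<close> show ?thesis
    by blast
qed

lemma orsat_clique_le_polarity_blowup:
  "2 * orsat_clique (t * (nat p ^ 2 + nat p + 1)) (t + 2)
    \<le> t * (nat p ^ 2 + nat p + 1) * (t - 1 + t * (nat p + 1))"
  using orsat_clique_le_blowup[OF finite_points adj_commute adj_irrefl card_adj_neighbours
      adj_diameter_2, of t]
  by (simp add: card_points)

end

lemma orsat_clique_le_prime:
  fixes q :: nat
  assumes "prime q" and "q > 2"
  shows "2 * orsat_clique (t * (q\<^sup>2 + q + 1)) (t + 2) \<le> t * (q\<^sup>2 + q + 1) * (t - 1 + t * (q + 1))"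
proof -
  interpret odd_prime "int q"
    using assms by unfold_locales auto
  show ?thesis
    using orsat_clique_le_polarity_blowup by simp
qed

section \<open>Asymptotics\<close>

lemma powr_three_halves:
  fixes x :: real
  assumes "x \<ge> 0"
  shows "x powr (3/2) = x * sqrt x"
proof -
  have "x powr (3/2) = x powr (1 + 1/2)"
    by simp
  also have "\<dots> = x powr 1 * x powr (1/2)"
    by (rule powr_add)
  also have "\<dots> = x * sqrt x"
    using assms by (simp add: powr_half_sqrt)
  finally show ?thesis .
qed

lemma orsat_clique_ratio_ge:
  assumes "n \<ge> 1"
  shows "(sqrt (real t * (real n - 1)) - real t) / (2 * sqrt (real n))
    \<le> real (orsat_clique n (t + 2)) / real n powr (3/2)"
proof -
  have "0 < real n"
    using assms by simp
  then have "(sqrt (real t * (real n - 1)) - real t) / (2 * sqrt (real n))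
      = real n * (sqrt (real t * (real n - 1)) - real t) / (2 * (real n * sqrt (real n)))"
    by simp
  also have "\<dots> \<le> 2 * real (orsat_clique n (t + 2)) / (2 * (real n * sqrt (real n)))"
    using orsat_clique_lower_bound[OF assms] \<open>0 < real n\<close> by (intro divide_right_mono) auto
  also have "\<dots> = real (orsat_clique n (t + 2)) / real n powr (3/2)"
    by (simp add: powr_three_halves)
  finally show ?thesis .
qed

lemma orsat_clique_ratio_le_prime:
  fixes q :: nat
  assumes "prime q" "q > 2" "t \<ge> 1"
  defines "n \<equiv> t * (q\<^sup>2 + q + 1)"
  shows "real (orsat_clique n (t + 2)) / real n powr (3/2) \<le> sqrt t / 2 + sqrt t / q"
proof -
  have "0 < n"
    unfolding n_def using assms(3) by (intro mult_pos_pos) simp_all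
  then have "0 < real n"
    by simp
  have "0 < sqrt t" "0 < real q"
    using assms by simp_all
  have "2 * orsat_clique n (t + 2) \<le> n * (t * (q + 2))"
    using orsat_clique_le_prime[OF assms(1,2), of t] unfolding n_def
    by (rule order.trans) (simp add: algebra_simps)
  then have "real (2 * orsat_clique n (t + 2)) \<le> real (n * (t * (q + 2)))"
    by (simp only: of_nat_le_iff)
  then have "real (orsat_clique n (t + 2)) \<le> real n * (real t * (real q + 2)) / 2"
    by (simp add: algebra_simps)
  have "sqrt (real t * (real q)\<^sup>2) \<le> sqrt (real n)"
    unfolding n_def by (simp add: algebra_simps power2_eq_square)
  then have "sqrt t * q \<le> sqrt n"
    by (simp add: real_sqrt_mult)
  have "real (orsat_clique n (t + 2)) / real n powr (3/2)
      = real (orsat_clique n (t + 2)) / (real n * sqrt n)"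
    by (simp add: powr_three_halves)
  also have "\<dots> \<le> real n * (real t * (real q + 2)) / 2 / (real n * sqrt n)"
    using \<open>real (orsat_clique n (t + 2)) \<le> _\<close> by (rule divide_right_mono) simp
  also have "\<dots> = real t * (real q + 2) / (2 * sqrt n)"
    using \<open>0 < real n\<close> by simp
  also have "\<dots> \<le> real t * (real q + 2) / (2 * (sqrt t * q))"
    using \<open>sqrt t * q \<le> sqrt n\<close> \<open>0 < sqrt t\<close> \<open>0 < real q\<close> \<open>0 < real n\<close>
    by (intro divide_left_mono mult_left_mono) simp_all
  also have "\<dots> = sqrt t / 2 + sqrt t / q"
  proof -
    have "s * s * (x + 2) / (2 * (s * x)) = s / 2 + s / x" if "s > 0" "x > 0" for s x :: real
      using that by (simp add: field_simps)
    from this[OF \<open>0 < sqrt t\<close> \<open>0 < real q\<close>] show ?thesis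
      by simp
  qed
  finally show ?thesis .
qed

lemma liminf_le_if_frequently_less:
  fixes X :: "nat \<Rightarrow> 'a :: {complete_linorder, dense_linorder}"
  assumes "\<And>y. c < y \<Longrightarrow> \<exists>\<^sub>F n in sequentially. X n < y"
  shows "liminf X \<le> c"
proof (rule ccontr)
  assume "\<not> liminf X \<le> c"
  then have "c < liminf X"
    by simp
  then obtain y where "c < y" "y < liminf X"
    using dense by blast
  from \<open>y < liminf X\<close> have "eventually (\<lambda>n. y < X n) sequentially"
    by (rule less_LiminfD)
  then obtain N where N: "\<And>n. n \<ge> N \<Longrightarrow> y < X n"
    unfolding eventually_sequentially by blast
  obtain n where "n \<ge> N" "X n < y"
    using assms[OF \<open>c < y\<close>] unfolding frequently_sequentially by blast
  with N[OF \<open>n \<ge> N\<close>] show False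
    by (simp add: less_asym)
qed

lemma liminf_orsat_clique_ge:
  assumes "t \<ge> 1"
  shows "ereal (sqrt t / 2) \<le> liminf (\<lambda>n. ereal (real (orsat_clique n (t + 2)) / real n powr (3/2)))"
proof -
  define lower where "lower n = (sqrt (real t * (real n - 1)) - real t) / (2 * sqrt (real n))" for n :: nat
  have "(lower \<longlongrightarrow> real t powr (1/2) / 2) sequentially"
    unfolding lower_def using assms by real_asymp
  then have "(lower \<longlongrightarrow> sqrt t / 2) sequentially"
    unfolding powr_half_sqrt[OF of_nat_0_le_iff] .
  then have "liminf (\<lambda>n. ereal (lower n)) = ereal (sqrt t / 2)"
    by (intro lim_imp_Liminf) auto
  moreover have "liminf (\<lambda>n. ereal (lower n))
      \<le> liminf (\<lambda>n. ereal (real (orsat_clique n (t + 2)) / real n powr (3/2)))"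
    unfolding lower_def using orsat_clique_ratio_ge
    by (intro Liminf_mono) (auto simp: eventually_sequentially)
  ultimately show ?thesis
    by simp
qed

lemma liminf_orsat_clique_le:
  assumes "t \<ge> 1"
  shows "liminf (\<lambda>n. ereal (real (orsat_clique n (t + 2)) / real n powr (3/2))) \<le> ereal (sqrt t / 2)"
proof (rule liminf_le_if_frequently_less, unfold frequently_sequentially, intro allI)
  fix y N assume "ereal (sqrt t / 2) < y"
  have "((\<lambda>q. sqrt t / 2 + sqrt t / real q) \<longlongrightarrow> sqrt t / 2 + 0) sequentially"
    by (intro tendsto_add tendsto_const lim_const_over_n)
  then have "((\<lambda>q. ereal (sqrt t / 2 + sqrt t / real q)) \<longlongrightarrow> ereal (sqrt t / 2)) sequentially"
    by (simp add: tendsto_ereal)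
  then have "eventually (\<lambda>q. ereal (sqrt t / 2 + sqrt t / real q) < y) sequentially"
    using \<open>ereal (sqrt t / 2) < y\<close> by (rule order_tendstoD(2))
  then obtain Q where Q: "\<And>q. q \<ge> Q \<Longrightarrow> ereal (sqrt t / 2 + sqrt t / real q) < y"
    unfolding eventually_sequentially by blast
  obtain q :: nat where "prime q" and q: "max (max N Q) 2 < q"
    using bigger_prime by blast
  define n where "n = t * (q\<^sup>2 + q + 1)"
  have "q \<le> n"
    unfolding n_def using assms by (metis le_add2 le_add1 le_trans mult_1 mult_le_mono1)
  with q have "N \<le> n"
    by simp
  have "ereal (real (orsat_clique n (t + 2)) / real n powr (3/2)) \<le> ereal (sqrt t / 2 + sqrt t / q)"
    using orsat_clique_ratio_le_prime[OF \<open>prime q\<close> _ assms] q unfolding n_def by simp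
  also have "\<dots> < y"
    using Q q by simp
  finally show "\<exists>n\<ge>N. ereal (real (orsat_clique n (t + 2)) / real n powr (3/2)) < y"
    using \<open>N \<le> n\<close> by blast
qed

theorem theorem1p5:
  fixes t :: nat
  assumes "t \<ge> 1"
  shows "liminf (\<lambda>n. ereal (real (orsat_clique n (t + 2)) / real n powr (3/2)))
           = ereal (sqrt (real t) / 2)"
  using liminf_orsat_clique_le[OF assms] liminf_orsat_clique_ge[OF assms] by (rule antisym)

end
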